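(* Let $P$ be an online abstract network design problem. Consider an instance of $P$ on a tree metric $(T,d_T)$ with request sequence $Z_1,\ldots,Z_r$, and let $T_i=T[\mathcal Z_i]$ be the subtree of $T$ induced by $\mathcal Z_i=Z_1\cup\cdots\cup Z_i$. Then for any feasible solution $\mathcal S=((R_1,C_1),\ldots,(R_r,C_r))$ there exists a feasible solution $\mathcal S'=((R'_1,C_1),\ldots,(R'_r,C_r))$ such that each $R'_i$ is contained in $T_i$ and $\mathrm{cost}(\mathcal S')\le\mathrm{cost}(\mathcal S)$.
   Context: Abstract network design: an instance consists of a graph (here the edge-weighted tree $T$ with lengths $d_T$) and online requests $Z_i$ of terminals; a solution is a sequence of responses $(R_i,C_i)$ with $R_i$ a set of edges and $C_i$ an ordered list of pairs from $\binom{\mathcal Z_i}{2}$. Given feasibility functions $\mathcal F_i$, the solution is feasible iff for each $i$, $\mathcal F_i(C_1,\ldots,C_i)=1$ and each pair of $C_j$ is connected in $R_j$ for all $j\le i$. Load function $\rho$ on subsets of time steps is subadditive, monotone increasing, and zero exactly on $\emptyset$; the cost is $\sum_{e}d_T(e)\rho(\{j: e\in R_j\})$. $T[\mathcal Z_i]$ is the minimal subtree of $T$ containing $\mathcal Z_i$. *)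

theory Defs
  imports Complex_Main
begin

definition walk_in :: "'a set set \<Rightarrow> 'a list \<Rightarrow> bool" where
  "walk_in F p \<longleftrightarrow> p \<noteq> [] \<and> (\<forall>k < length p - 1. {p ! k, p ! Suc k} \<in> F)"

definition connected_in :: "'a set set \<Rightarrow> 'a \<Rightarrow> 'a \<Rightarrow> bool" where
  "connected_in F u v \<longleftrightarrow> (\<exists>p. walk_in F p \<and> hd p = u \<and> last p = v)"

definition has_cycle :: "'a set set \<Rightarrow> bool" where
  "has_cycle E \<longleftrightarrow> (\<exists>p. length p \<ge> 3 \<and> distinct p \<and> walk_in E p \<and> {last p, hd p} \<in> E)"

definition is_tree :: "'a set \<Rightarrow> 'a set set \<Rightarrow> bool" where
  "is_tree V E \<longleftrightarrow> finite V \<and> V \<noteq> {} \<and> (\<forall>e\<in>E. e \<subseteq> V \<and> card e = 2)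
     \<and> (\<forall>u\<in>V. \<forall>v\<in>V. connected_in E u v) \<and> \<not> has_cycle E"

text \<open>Edge set of the minimal subtree T[Z] of T containing Z: the edges common to
  every edge set of T connecting all of Z (in a tree this is exactly the union of
  the paths between vertices of Z).\<close>
definition min_subtree :: "'a set set \<Rightarrow> 'a set \<Rightarrow> 'a set set" where
  "min_subtree E Z = \<Inter> {F. F \<subseteq> E \<and> (\<forall>u\<in>Z. \<forall>v\<in>Z. connected_in F u v)}"

definition Zcum :: "(nat \<Rightarrow> 'a set) \<Rightarrow> nat \<Rightarrow> 'a set" where
  "Zcum Z i = (\<Union>j\<in>{1..i}. Z j)"

definition load_fun :: "nat \<Rightarrow> (nat set \<Rightarrow> real) \<Rightarrow> bool" where
  "load_fun r \<rho> \<longleftrightarrow>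
     (\<forall>A B. A \<subseteq> {1..r} \<longrightarrow> B \<subseteq> {1..r} \<longrightarrow> \<rho> (A \<union> B) \<le> \<rho> A + \<rho> B)
   \<and> (\<forall>A B. A \<subseteq> B \<longrightarrow> B \<subseteq> {1..r} \<longrightarrow> \<rho> A \<le> \<rho> B)
   \<and> (\<forall>A. A \<subseteq> {1..r} \<longrightarrow> (\<rho> A = 0 \<longleftrightarrow> A = {}))"

definition is_solution :: "'a set set \<Rightarrow> (nat \<Rightarrow> 'a set) \<Rightarrow> nat
    \<Rightarrow> (nat \<Rightarrow> 'a set set) \<Rightarrow> (nat \<Rightarrow> 'a set list) \<Rightarrow> bool" where
  "is_solution E Z r R C \<longleftrightarrow> (\<forall>i\<in>{1..r}. R i \<subseteq> E \<and>
      (\<forall>p\<in>set (C i). p \<subseteq> Zcum Z i \<and> card p = 2))"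

definition feasible :: "(nat \<Rightarrow> 'a set list list \<Rightarrow> bool) \<Rightarrow> 'a set set \<Rightarrow> (nat \<Rightarrow> 'a set) \<Rightarrow> nat
    \<Rightarrow> (nat \<Rightarrow> 'a set set) \<Rightarrow> (nat \<Rightarrow> 'a set list) \<Rightarrow> bool" where
  "feasible \<F> E Z r R C \<longleftrightarrow> is_solution E Z r R C \<and>
     (\<forall>i\<in>{1..r}. \<F> i (map C [1..<Suc i]) \<and>
        (\<forall>j\<in>{1..i}. \<forall>p\<in>set (C j). \<exists>u v. p = {u, v} \<and> connected_in (R j) u v))"

definition cost :: "'a set set \<Rightarrow> ('a set \<Rightarrow> real) \<Rightarrow> (nat set \<Rightarrow> real) \<Rightarrow> nat
    \<Rightarrow> (nat \<Rightarrow> 'a set set) \<Rightarrow> real" where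
  "cost E d \<rho> r R = (\<Sum>e\<in>E. d e * \<rho> {j\<in>{1..r}. e \<in> R j})"

end

theory Submission
  imports Defs
begin

(* Removing an edge from an acyclic graph disconnects its endpoints. Hence every edge of a
   simple path between two terminals lies in every edge set connecting them, i.e. in the
   minimal subtree T[Z]. Cutting each R_i down to T_i therefore keeps all pairs of C_i
   connected, and since lengths are nonnegative and the load function is monotone, the
   cost cannot increase. *)

lemma walk_in_iff_successively:
  "walk_in F p \<longleftrightarrow> p \<noteq> [] \<and> successively (\<lambda>x y. {x, y} \<in> F) p"
  unfolding walk_in_def successively_conv_nth by (auto simp: less_diff_conv)

lemma walk_in_rev: "walk_in F p \<Longrightarrow> walk_in F (rev p)"
  by (simp add: walk_in_iff_successively insert_commute)

lemma walk_in_mono: "walk_in F p \<Longrightarrow> F \<subseteq> G \<Longrightarrow> walk_in G p"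
  unfolding walk_in_def by blast

lemma walk_in_Int: "walk_in F p \<Longrightarrow> walk_in G p \<Longrightarrow> walk_in (F \<inter> G) p"
  unfolding walk_in_def by blast

lemma walk_in_Diff_edge:
  assumes "walk_in F p" "\<not> {a, b} \<subseteq> set p"
  shows "walk_in (F - {{a, b}}) p"
proof -
  have "{p ! k, p ! Suc k} \<noteq> {a, b}" if "Suc k < length p" for k
    using that assms(2) by (metis Suc_lessD empty_subsetI insert_subset nth_mem)
  with assms(1) show ?thesis
    unfolding walk_in_def by (simp add: less_diff_conv)
qed

lemma walk_in_distinct:
  assumes "walk_in F p"
  shows "\<exists>q. walk_in F q \<and> distinct q \<and> hd q = hd p \<and> last q = last p"
  using assms
proof (induction p rule: length_induct)
  case (1 p)
  show ?case
  proof (cases "distinct p")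
    case True
    with "1.prems" show ?thesis by blast
  next
    case False
    then obtain xs x ys zs where p: "p = xs @ x # ys @ x # zs"
      using not_distinct_decomp[OF False] by auto
    let ?p' = "xs @ x # zs"
    have "walk_in F ?p'"
      using "1.prems" unfolding p walk_in_iff_successively
      by (auto simp: successively_append_iff successively_Cons)
    moreover have "hd ?p' = hd p" "last ?p' = last p" "length ?p' < length p"
      by (simp_all add: p hd_append)
    ultimately show ?thesis
      using "1.IH" by metis
  qed
qed

lemma connected_in_mono: "connected_in F u v \<Longrightarrow> F \<subseteq> G \<Longrightarrow> connected_in G u v"
  unfolding connected_in_def using walk_in_mono by blast

lemma connected_in_sym: "connected_in F u v \<Longrightarrow> connected_in F v u"
  unfolding connected_in_def by (metis walk_in_rev hd_rev last_rev)

lemma connected_in_trans: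
  assumes "connected_in F u v" "connected_in F v w"
  shows "connected_in F u w"
proof -
  obtain p q where p: "walk_in F p" "hd p = u" "last p = v"
    and q: "walk_in F q" "hd q = v" "last q = w"
    using assms unfolding connected_in_def by blast
  from q obtain q' where q': "q = v # q'"
    by (cases q) (auto simp: walk_in_def)
  have "walk_in F (p @ q')"
    using p q q' unfolding walk_in_iff_successively
    by (auto simp: successively_append_iff successively_Cons)
  moreover have "hd (p @ q') = u" "last (p @ q') = w"
    using p q q' by (auto simp: walk_in_def)
  ultimately show ?thesis unfolding connected_in_def by blast
qed

lemma connected_in_distinct_walk:
  "connected_in F u v \<Longrightarrow> \<exists>p. walk_in F p \<and> distinct p \<and> hd p = u \<and> last p = v"
  unfolding connected_in_def using walk_in_distinct by metis

lemma acyclic_Diff_edge_disconnects: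
  assumes acyclic: "\<not> has_cycle E" and ab: "{a, b} \<in> E" "a \<noteq> b"
  shows "\<not> connected_in (E - {{a, b}}) a b"
proof
  assume "connected_in (E - {{a, b}}) a b"
  then obtain q where q: "walk_in (E - {{a, b}}) q" "distinct q" "hd q = a" "last q = b"
    by (blast dest: connected_in_distinct_walk)
  have "length q \<ge> 3"
    using q ab by (cases q rule: remdups_adj.cases) (auto simp: walk_in_iff_successively Suc_le_eq)
  moreover have "walk_in E q"
    using q(1) by (rule walk_in_mono) blast
  moreover have "{last q, hd q} \<in> E"
    using q(3,4) ab(1) by (simp add: insert_commute)
  ultimately show False
    using acyclic q(2) unfolding has_cycle_def by blast
qed

lemma acyclic_simple_path_edge_mem:
  assumes acyclic: "\<not> has_cycle E" and p: "walk_in E p" "distinct p"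
    and F: "F \<subseteq> E" "connected_in F (hd p) (last p)" and k: "Suc k < length p"
  shows "{p ! k, p ! Suc k} \<in> F"
proof (rule ccontr)
  define a b where "a = p ! k" and "b = p ! Suc k"
  define xs ys where "xs = take (Suc k) p" and "ys = drop (Suc k) p"
  let ?G = "E - {{a, b}}"
  assume "{p ! k, p ! Suc k} \<notin> F"
  with F have "connected_in ?G (hd p) (last p)"
    by (auto simp: a_def b_def elim!: connected_in_mono)
  have split: "p = xs @ ys" and ne: "xs \<noteq> []" "ys \<noteq> []"
    using k by (auto simp: xs_def ys_def)
  have ends: "last xs = a" "hd ys = b"
    using k by (simp_all add: xs_def ys_def a_def b_def take_Suc_conv_app_nth hd_drop_conv_nth)
  have walks: "walk_in E xs" "walk_in E ys"
    using p(1) ne unfolding split walk_in_iff_successively by (auto simp: successively_append_iff)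
  have "b \<notin> set xs" "a \<notin> set ys"
    using p(2) ends ne unfolding split by (auto dest: last_in_set hd_in_set)
  then have "walk_in ?G xs" "walk_in ?G ys"
    using walks by (auto intro: walk_in_Diff_edge)
  then have "connected_in ?G (hd p) a" "connected_in ?G b (last p)"
    using split ne ends unfolding connected_in_def by auto
  with \<open>connected_in ?G (hd p) (last p)\<close> have "connected_in ?G a b"
    by (meson connected_in_sym connected_in_trans)
  moreover have "{a, b} \<in> E" "a \<noteq> b"
    using p k by (auto simp: a_def b_def walk_in_def nth_eq_iff_index_eq)
  ultimately show False
    using acyclic_Diff_edge_disconnects[OF acyclic] by blast
qed

lemma simple_path_in_min_subtree:
  assumes acyclic: "\<not> has_cycle E" and p: "walk_in E p" "distinct p"
    and ends: "hd p \<in> Z" "last p \<in> Z"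
  shows "walk_in (min_subtree E Z) p"
  unfolding walk_in_def min_subtree_def
proof (intro conjI allI impI InterI)
  show "p \<noteq> []"
    using p(1) by (simp add: walk_in_def)
  fix k F
  assume "k < length p - 1" and "F \<in> {F. F \<subseteq> E \<and> (\<forall>u\<in>Z. \<forall>v\<in>Z. connected_in F u v)}"
  with acyclic p ends show "{p ! k, p ! Suc k} \<in> F"
    by (auto intro!: acyclic_simple_path_edge_mem)
qed

lemma connected_in_Int_min_subtree:
  assumes acyclic: "\<not> has_cycle E" and "F \<subseteq> E" "connected_in F u v" "u \<in> Z" "v \<in> Z"
  shows "connected_in (F \<inter> min_subtree E Z) u v"
proof -
  obtain p where p: "walk_in F p" "distinct p" "hd p = u" "last p = v"
    using assms(3) by (blast dest: connected_in_distinct_walk)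
  have "walk_in (min_subtree E Z) p"
    using p assms by (auto intro!: simple_path_in_min_subtree elim: walk_in_mono)
  with p show ?thesis
    unfolding connected_in_def by (blast intro: walk_in_Int)
qed

lemma feasible_if_requests_stay_connected:
  assumes feas: "feasible \<F> E Z r R C"
    and sub: "\<forall>i\<in>{1..r}. R' i \<subseteq> R i"
    and conn: "\<And>j u v. j \<in> {1..r} \<Longrightarrow> {u, v} \<in> set (C j) \<Longrightarrow> connected_in (R j) u v
      \<Longrightarrow> connected_in (R' j) u v"
  shows "feasible \<F> E Z r R' C"
  unfolding feasible_def
proof (intro conjI ballI)
  show "is_solution E Z r R' C"
    using feas sub unfolding feasible_def is_solution_def by blast
next
  fix i assume "i \<in> {1..r}"
  then show "\<F> i (map C [1..<Suc i])"
    using feas unfolding feasible_def by blast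
next
  fix i j p assume i: "i \<in> {1..r}" and j: "j \<in> {1..i}" and p: "p \<in> set (C j)"
  then obtain u v where "p = {u, v}" "connected_in (R j) u v"
    using feas unfolding feasible_def by blast
  moreover have "j \<in> {1..r}"
    using i j by simp
  ultimately show "\<exists>u v. p = {u, v} \<and> connected_in (R' j) u v"
    using p conn by blast
qed

lemma cost_mono:
  assumes "\<forall>e\<in>E. d e \<ge> 0" and "load_fun r \<rho>" and "\<forall>i\<in>{1..r}. R' i \<subseteq> R i"
  shows "cost E d \<rho> r R' \<le> cost E d \<rho> r R"
  unfolding cost_def
proof (rule sum_mono)
  fix e assume "e \<in> E"
  have "{j\<in>{1..r}. e \<in> R' j} \<subseteq> {j\<in>{1..r}. e \<in> R j}"
    using assms(3) by blast
  then have "\<rho> {j\<in>{1..r}. e \<in> R' j} \<le> \<rho> {j\<in>{1..r}. e \<in> R j}"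
    using assms(2) unfolding load_fun_def by blast
  with assms(1) \<open>e \<in> E\<close> show "d e * \<rho> {j\<in>{1..r}. e \<in> R' j} \<le> d e * \<rho> {j\<in>{1..r}. e \<in> R j}"
    by (simp add: mult_left_mono)
qed

theorem proposition3p3:
  fixes V :: "'a set" and E :: "'a set set" and d :: "'a set \<Rightarrow> real"
    and \<rho> :: "nat set \<Rightarrow> real" and \<F> :: "nat \<Rightarrow> 'a set list list \<Rightarrow> bool"
    and Z :: "nat \<Rightarrow> 'a set" and r :: nat
    and R :: "nat \<Rightarrow> 'a set set" and C :: "nat \<Rightarrow> 'a set list"
  assumes tree: "is_tree V E"
    and lengths: "\<forall>e\<in>E. d e \<ge> 0"
    and load: "load_fun r \<rho>"
    and requests: "\<forall>i\<in>{1..r}. Z i \<subseteq> V"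
    and feas: "feasible \<F> E Z r R C"
  shows "\<exists>R'. feasible \<F> E Z r R' C
            \<and> (\<forall>i\<in>{1..r}. R' i \<subseteq> min_subtree E (Zcum Z i))
            \<and> cost E d \<rho> r R' \<le> cost E d \<rho> r R"
proof -
  define R' where "R' i = R i \<inter> min_subtree E (Zcum Z i)" for i
  have acyclic: "\<not> has_cycle E"
    using tree unfolding is_tree_def by blast
  have R'_sub: "\<forall>i\<in>{1..r}. R' i \<subseteq> R i"
    by (simp add: R'_def)
  have "feasible \<F> E Z r R' C"
  proof (rule feasible_if_requests_stay_connected[OF feas R'_sub])
    fix j u v
    assume "j \<in> {1..r}" "{u, v} \<in> set (C j)" "connected_in (R j) u v"
    moreover from calculation have "R j \<subseteq> E" "{u, v} \<subseteq> Zcum Z j"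
      using feas unfolding feasible_def is_solution_def by blast+
    ultimately show "connected_in (R' j) u v"
      unfolding R'_def by (simp add: connected_in_Int_min_subtree[OF acyclic])
  qed
  moreover have "\<forall>i\<in>{1..r}. R' i \<subseteq> min_subtree E (Zcum Z i)"
    by (simp add: R'_def)
  moreover have "cost E d \<rho> r R' \<le> cost E d \<rho> r R"
    using lengths load R'_sub by (rule cost_mono)
  ultimately show ?thesis
    by blast
qed

end
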